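(* Let $1\le r\le n$ be integers and suppose there is a prime $p$ with $\frac{n}{r+1}<p\le\frac{n}{r}$ and $r<p$. Then for every $r$-tuple of positive integers $\mathbf{s}=(s_1,\ldots,s_r)$, $H_n(s_1,\ldots,s_r)$ is not an integer.
   Context: $H_n(s_1,\ldots,s_r)=\sum_{1\le k_1<k_2<\cdots<k_r\le n}\frac{1}{k_1^{s_1}\cdots k_r^{s_r}}$. *)

theory Defs
  imports Complex_Main "HOL-Computational_Algebra.Primes"
begin

definition mhs :: "nat \<Rightarrow> nat list \<Rightarrow> real" where
  "mhs n s = (\<Sum>k\<in>{k :: nat list. length k = length s \<and> sorted_wrt (<) k \<and> set k \<subseteq> {1..n}}.
              \<Prod>i<length s. 1 / (real (k ! i) ^ (s ! i)))"

end

theory Submission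
  imports Defs
begin

text \<open>The multiples of \<open>p\<close> in \<open>{1..n}\<close> are exactly \<open>p, 2p, \<dots>, rp\<close>, and since \<open>r < p\<close> each of
  them contains \<open>p\<close> exactly once. Hence the only index tuple all of whose entries are divisible
  by \<open>p\<close> is \<open>(p, 2p, \<dots>, rp)\<close>, whose term has \<open>p\<close>-adic valuation \<open>-(s\<^sub>1 + \<dots> + s\<^sub>r)\<close>, while
  every other term has strictly larger valuation. Over the common denominator
  \<open>(p Q)^(s\<^sub>1 + \<dots> + s\<^sub>r)\<close>, with \<open>Q\<close> the product of the non-multiples of \<open>p\<close> up to \<open>n\<close>, all
  numerators but one are divisible by \<open>p\<close>, so the sum is not an integer.\<close>

lemma sum_inverse_not_Ints:
  fixes w :: "'a \<Rightarrow> nat" and D p :: nat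
  assumes "finite K" "k0 \<in> K" "p dvd D"
    and dvd: "\<And>k. k \<in> K \<Longrightarrow> w k dvd D"
    and others: "\<And>k. k \<in> K - {k0} \<Longrightarrow> p * w k dvd D"
    and exceptional: "\<not> p * w k0 dvd D"
  shows "(\<Sum>k\<in>K. 1 / real (w k)) \<notin> \<int>"
proof
  have "0 < D" using exceptional by (rule contrapos_np) simp
  assume "(\<Sum>k\<in>K. 1 / real (w k)) \<in> \<int>"
  then obtain z where z: "(\<Sum>k\<in>K. 1 / real (w k)) = of_int z"
    by (auto elim: Ints_cases)
  define c where "c k = D div w k" for k
  have "real D * (1 / real (w k)) = real (c k)" if "k \<in> K" for k
    using dvd[OF that] \<open>0 < D\<close> by (auto simp: c_def real_of_nat_div elim: dvdE)
  then have "real D * of_int z = real (\<Sum>k\<in>K. c k)"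
    unfolding z[symmetric] sum_distrib_left by simp
  then have "int D * z = int (\<Sum>k\<in>K. c k)"
    by (metis of_int_eq_iff of_int_mult of_int_of_nat_eq)
  then have p_dvd_sum: "p dvd (\<Sum>k\<in>K. c k)"
    using \<open>p dvd D\<close> by (metis dvd_mult2 int_dvd_int_iff of_nat_dvd_iff)
  have "p dvd c k" if k: "k \<in> K - {k0}" for k
  proof -
    obtain t where "D = p * w k * t" using others[OF k] by blast
    with \<open>0 < D\<close> show ?thesis by (simp add: c_def)
  qed
  then have "p dvd (\<Sum>k\<in>K - {k0}. c k)" by (rule dvd_sum)
  moreover have "(\<Sum>k\<in>K. c k) = c k0 + (\<Sum>k\<in>K - {k0}. c k)"
    using assms(1,2) by (rule sum.remove)
  ultimately have "p dvd c k0" using p_dvd_sum by (simp add: dvd_add_left_iff)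
  obtain a where a: "D = w k0 * a" using dvd[OF \<open>k0 \<in> K\<close>] by (rule dvdE)
  with \<open>0 < D\<close> have "c k0 = a" by (simp add: c_def)
  with \<open>p dvd c k0\<close> have "p * w k0 dvd D" by (simp add: a mult.commute mult_dvd_mono)
  with exceptional show False ..
qed

lemma mult_prod_dvd_prod:
  fixes f g :: "'a \<Rightarrow> 'b :: comm_semiring_1"
  assumes "finite I" "i0 \<in> I" "\<And>i. i \<in> I \<Longrightarrow> f i dvd g i" "c * f i0 dvd g i0"
  shows "c * prod f I dvd prod g I"
proof -
  have "c * f i0 * prod f (I - {i0}) dvd g i0 * prod g (I - {i0})"
    using assms by (intro mult_dvd_mono prod_dvd_prod) auto
  then show ?thesis
    using assms(1,2) by (simp add: prod.remove mult.assoc)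
qed

lemma strict_sorted_eq_upt:
  assumes "sorted_wrt (<) xs" "length xs = r" "set xs \<subseteq> {1..r}"
  shows "xs = [1..<r+1]"
proof -
  have "distinct xs" "sorted xs" using assms(1) strict_sorted_iff by blast+
  then have "card (set xs) = card {1..r}" using assms(2) distinct_card by fastforce
  then have "set xs = {1..r}" using assms(3) by (intro card_subset_eq) auto
  then have "set xs = set [1..<r+1]"
    by (simp del: upt_Suc add: atLeastLessThanSuc_atLeastAtMost)
  with \<open>distinct xs\<close> \<open>sorted xs\<close> show ?thesis
    using sorted_distinct_set_unique sorted_upt distinct_upt by blast
qed

lemma multiple_in_range:
  fixes p x n r :: nat
  assumes "p dvd x" "x \<in> {1..n}" "n < (r + 1) * p"
  obtains j where "j \<in> {1..r}" "x = j * p"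
proof -
  define j where "j = x div p"
  have j: "x = j * p" using \<open>p dvd x\<close> by (simp add: j_def)
  with assms(2,3) have "j * p < (r + 1) * p" "1 \<le> j" by (auto intro: Suc_leI)
  then have "j \<in> {1..r}" by (simp del: mult_Suc)
  with j that show ?thesis by blast
qed

lemma bounds_from_real:
  fixes n r p :: nat
  assumes "1 \<le> r" "real n / real (r + 1) < real p" "real p \<le> real n / real r"
  shows "n < (r + 1) * p" "r * p \<le> n"
proof -
  have "real n < real ((r + 1) * p)" using assms(2) by (simp add: field_simps)
  then show "n < (r + 1) * p" by linarith
  have "real (r * p) \<le> real n" using assms(1,3) by (simp add: field_simps)
  then show "r * p \<le> n" by linarith
qed

definition index_tuples :: "nat \<Rightarrow> nat \<Rightarrow> nat list set" where
  "index_tuples n r = {k. length k = r \<and> sorted_wrt (<) k \<and> set k \<subseteq> {1..n}}"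

definition tuple_weight :: "nat list \<Rightarrow> nat list \<Rightarrow> nat" where
  "tuple_weight s k = (\<Prod>i<length s. (k ! i) ^ (s ! i))"

definition nonmultiples_prod :: "nat \<Rightarrow> nat \<Rightarrow> nat" where
  "nonmultiples_prod p n = \<Prod>{j\<in>{1..n}. \<not> p dvd j}"

lemma finite_index_tuples: "finite (index_tuples n r)"
proof -
  have "index_tuples n r \<subseteq> {k. set k \<subseteq> {1..n} \<and> length k = r}"
    unfolding index_tuples_def by auto
  then show ?thesis
    using finite_lists_length_eq[of "{1..n}" r] finite_subset by blast
qed

lemma mhs_eq_sum_inverse_weights:
  "mhs n s = (\<Sum>k\<in>index_tuples n (length s). 1 / real (tuple_weight s k))"
  unfolding mhs_def index_tuples_def tuple_weight_def by (simp add: prod_dividef)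

lemma weight_dvd_power:
  assumes "length k = length s" "\<And>x. x \<in> set k \<Longrightarrow> x dvd M"
  shows "tuple_weight s k dvd M ^ sum_list s"
  unfolding tuple_weight_def sum_list_sum_nth atLeast0LessThan power_sum
  using assms by (intro prod_dvd_prod dvd_power_same) auto

lemma mult_weight_dvd_power:
  assumes "length k = length s" "\<And>x. x \<in> set k \<Longrightarrow> x dvd p * Q"
    and "i0 < length s" "k ! i0 dvd Q" "0 < s ! i0"
  shows "p * tuple_weight s k dvd (p * Q) ^ sum_list s"
proof -
  obtain e where e: "s ! i0 = Suc e" using \<open>0 < s ! i0\<close> gr0_implies_Suc by blast
  have "p * (k ! i0) ^ (s ! i0) = p * k ! i0 * (k ! i0) ^ e" by (simp add: e)
  also have "\<dots> dvd p * Q * (p * Q) ^ e"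
    using \<open>k ! i0 dvd Q\<close> by (intro mult_dvd_mono dvd_power_same) auto
  finally have "p * (k ! i0) ^ (s ! i0) dvd (p * Q) ^ (s ! i0)" by (simp add: e)
  then show ?thesis
    unfolding tuple_weight_def sum_list_sum_nth atLeast0LessThan power_sum
    using assms by (intro mult_prod_dvd_prod dvd_power_same) auto
qed

lemma weight_of_multiples:
  assumes "length js = length s"
  shows "tuple_weight s (map (\<lambda>j. j * p) js) = p ^ sum_list s * tuple_weight s js"
  unfolding tuple_weight_def sum_list_sum_nth atLeast0LessThan power_sum
  using assms by (simp add: power_mult_distrib prod.distrib mult.commute)

lemma multiples_tuple_mem:
  assumes "0 < p" "r * p \<le> n"
  shows "map (\<lambda>j. j * p) [1..<r+1] \<in> index_tuples n r"
proof -
  have "j * p \<le> n" if "j \<le> r" for j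
    using that assms(2) by (meson le_trans mult_le_mono1)
  moreover have "sorted_wrt (<) (map (\<lambda>j. j * p) [1..<r+1])"
    unfolding sorted_wrt_map
    by (rule sorted_wrt_mono_rel[OF _ sorted_wrt_upt]) (use assms(1) in simp)
  ultimately show ?thesis
    unfolding index_tuples_def using assms(1) by auto
qed

lemma index_tuple_of_multiples:
  assumes "k \<in> index_tuples n r" "\<And>x. x \<in> set k \<Longrightarrow> p dvd x" "n < (r + 1) * p"
  shows "k = map (\<lambda>j. j * p) [1..<r+1]"
proof -
  have k: "length k = r" "sorted_wrt (<) k" "set k \<subseteq> {1..n}"
    using assms(1) unfolding index_tuples_def by auto
  have "0 < p" using assms(3) by (cases p) auto
  have k_eq: "k = map (\<lambda>j. j * p) (map (\<lambda>x. x div p) k)"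
    using assms(2) by (auto simp: map_idI)
  have "sorted_wrt (<) (map (\<lambda>x. x div p) k)"
    unfolding sorted_wrt_map
  proof (rule sorted_wrt_mono_rel[OF _ k(2)])
    fix x y assume "x \<in> set k" "y \<in> set k" "x < y"
    then obtain a b where "x = p * a" "y = p * b" using assms(2) by (meson dvdE)
    with \<open>x < y\<close> \<open>0 < p\<close> show "x div p < y div p" by simp
  qed
  moreover have "set (map (\<lambda>x. x div p) k) \<subseteq> {1..r}"
  proof
    fix y assume "y \<in> set (map (\<lambda>x. x div p) k)"
    then obtain x where x: "x \<in> set k" "y = x div p" by auto
    with k(3) assms obtain j where "j \<in> {1..r}" "x = j * p"
      by (meson multiple_in_range subsetD)
    with x \<open>0 < p\<close> show "y \<in> {1..r}" by simp
  qed
  ultimately have "map (\<lambda>x. x div p) k = [1..<r+1]"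
    using strict_sorted_eq_upt k(1) by simp
  with k_eq show ?thesis by simp
qed

lemma dvd_nonmultiples_prod:
  assumes "j \<in> {1..n}" "\<not> p dvd j"
  shows "j dvd nonmultiples_prod p n"
  unfolding nonmultiples_prod_def using assms by (intro dvd_prodI) auto

lemma prime_not_dvd_nonmultiples_prod:
  assumes "prime p"
  shows "\<not> p dvd nonmultiples_prod p n"
  unfolding nonmultiples_prod_def using prime_dvd_prod_iff[OF _ assms, of _ id] by auto

lemma dvd_mult_nonmultiples_prod:
  assumes "x \<in> {1..n}" "n < (r + 1) * p" "r < p"
  shows "x dvd p * nonmultiples_prod p n"
proof (cases "p dvd x")
  case True
  with assms(1,2) obtain j where j: "j \<in> {1..r}" "x = j * p" by (metis multiple_in_range)
  have "j \<le> x" using mult_le_mono2[of 1 p j] assms(3) j(2) by simp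
  with j(1) assms(1) have "j \<in> {1..n}" by (meson atLeastAtMost_iff le_trans)
  moreover have "\<not> p dvd j" using j assms(3) by (auto dest: dvd_imp_le)
  ultimately have "j dvd nonmultiples_prod p n" by (rule dvd_nonmultiples_prod)
  with j show ?thesis by (simp add: mult.commute)
next
  case False
  with assms(1) show ?thesis by (simp add: dvd_nonmultiples_prod)
qed

lemma weight_dvd_common_denominator:
  assumes "k \<in> index_tuples n r" "length s = r" "n < (r + 1) * p" "r < p"
  shows "tuple_weight s k dvd (p * nonmultiples_prod p n) ^ sum_list s"
  using assms dvd_mult_nonmultiples_prod[OF _ assms(3,4)]
  by (intro weight_dvd_power) (auto simp: index_tuples_def)

lemma mult_weight_dvd_common_denominator:
  assumes "k \<in> index_tuples n r" "k \<noteq> map (\<lambda>j. j * p) [1..<r+1]"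
    and "length s = r" "\<forall>e\<in>set s. 0 < e" "n < (r + 1) * p" "r < p"
  shows "p * tuple_weight s k dvd (p * nonmultiples_prod p n) ^ sum_list s"
proof -
  have k: "length k = r" "set k \<subseteq> {1..n}"
    using assms(1) by (auto simp: index_tuples_def)
  obtain x where "x \<in> set k" "\<not> p dvd x"
    using assms(1,2,5) index_tuple_of_multiples by blast
  moreover from this k have "x dvd nonmultiples_prod p n"
    by (meson dvd_nonmultiples_prod subsetD)
  ultimately obtain i where "i < r" "k ! i dvd nonmultiples_prod p n"
    using k by (auto simp: in_set_conv_nth)
  with assms k show ?thesis
    using dvd_mult_nonmultiples_prod[OF _ assms(5,6)]
    by (intro mult_weight_dvd_power) auto
qed

lemma mult_multiples_weight_not_dvd:
  assumes "prime p" "\<not> p dvd Q" "length js = length s"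
  shows "\<not> p * tuple_weight s (map (\<lambda>j. j * p) js) dvd (p * Q) ^ sum_list s"
proof
  assume "p * tuple_weight s (map (\<lambda>j. j * p) js) dvd (p * Q) ^ sum_list s"
  then have "p ^ sum_list s * (p * tuple_weight s js) dvd p ^ sum_list s * Q ^ sum_list s"
    using assms(3) by (simp add: weight_of_multiples power_mult_distrib mult.left_commute)
  then have "p * tuple_weight s js dvd Q ^ sum_list s"
    using prime_gt_0_nat[OF assms(1)] by (simp add: dvd_times_left_cancel_iff)
  then have "p dvd Q ^ sum_list s" by (rule dvd_mult_left)
  with assms(1,2) show False using prime_dvd_power by blast
qed

theorem mainTheorem6:
  fixes n r p :: nat and s :: "nat list"
  assumes "1 \<le> r" and "r \<le> n"
    and "prime p"
    and "real n / real (r + 1) < real p" and "real p \<le> real n / real r"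
    and "r < p"
    and "length s = r" and "\<forall>i\<in>set s. 0 < i"
  shows "mhs n s \<notin> \<int>"
proof -
  have upper: "n < (r + 1) * p" and lower: "r * p \<le> n"
    using bounds_from_real assms(1,4,5) by auto
  define D where "D = (p * nonmultiples_prod p n) ^ sum_list s"
  show ?thesis
    unfolding mhs_eq_sum_inverse_weights assms(7)
  proof (rule sum_inverse_not_Ints)
    show "finite (index_tuples n r)" by (rule finite_index_tuples)
    show "map (\<lambda>j. j * p) [1..<r+1] \<in> index_tuples n r"
      using assms(6) lower by (intro multiples_tuple_mem) auto
    have "0 < sum_list s" using assms(1,7,8) by (cases s) auto
    then show "p dvd D" by (simp add: D_def dvd_trans[OF _ dvd_power])
    show "tuple_weight s k dvd D" if "k \<in> index_tuples n r" for k
      unfolding D_def using that assms(7) upper assms(6)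
      by (rule weight_dvd_common_denominator)
    show "p * tuple_weight s k dvd D"
      if "k \<in> index_tuples n r - {map (\<lambda>j. j * p) [1..<r+1]}" for k
      unfolding D_def using that assms(6,7,8) upper
      by (intro mult_weight_dvd_common_denominator) auto
    show "\<not> p * tuple_weight s (map (\<lambda>j. j * p) [1..<r+1]) dvd D"
      unfolding D_def using assms(3,7) prime_not_dvd_nonmultiples_prod
      by (intro mult_multiples_weight_not_dvd) auto
  qed
qed

end
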